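(* Let $k$ be a field of characteristic not $2$ or $3$, let $\mathcal{A}\in k^{n+1}\otimes\operatorname{Sym}_2k^{m+1}$ be a tensor with slices $A_0,\dots,A_n$ such that $\det\mathcal{A}(\mathbf{x},\cdot,\cdot)$ is reduced and irreducible, and let $X=Z(\det\mathcal{A}(\mathbf{x},\cdot,\cdot))\subseteq\mathbb{P}^n$ be the associated symmetroid hypersurface. Then for every smooth point $x$ of $X$ we have $\theta_X(x)=\psi(\varphi(x))$. For $x\in\mathbb{P}^n(\bar k)$, the quadric $Z(\widehat\psi(x))\subseteq\mathbb{P}^m$ is singular if and only if $x\in X(\bar k)$; furthermore, for any $x\in X(\bar k)$ the quadric $Z(\widehat\psi(x))$ is singular at the point $\varphi(x)$ (whenever $\varphi(x)$ is defined). For any $z=[H]\in\widehat{\mathbb{P}}^n(\bar k)$, the fibre $\psi^{-1}(z)$ is the base locus of the linear space of quadrics $\widehat\psi(H)$, i.e. of $\widehat\psi|_H:H\to\mathbb{P}H^0(\mathbb{P}^m,\mathcal{O}_{\mathbb{P}^m}(2))$.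
   Context: $\mathcal{A}$ is viewed as an $(n+1)$-tuple of symmetric $(m+1)\times(m+1)$ matrices $A_0,\dots,A_n$, and $\mathcal{A}(\mathbf{x},\cdot,\cdot)=\sum x_iA_i$. The maps are: $\widehat\psi:\mathbb{P}^n\to\mathbb{P}H^0(\mathbb{P}^m,\mathcal{O}_{\mathbb{P}^m}(2))$, $x\mapsto$ the quadratic form $\mathbf{y}^T\mathcal{A}(x,\cdot,\cdot)\mathbf{y}$; $\psi:\mathbb{P}^m\dashrightarrow\widehat{\mathbb{P}}^n$, $y\mapsto(y^TA_0y:\dots:y^TA_ny)$, where points of $\widehat{\mathbb{P}}^n$ are identified with hyperplanes of $\mathbb{P}^n$; the kernel map $\varphi:X\dashrightarrow\mathbb{P}^m$, $x\mapsto\mathbb{P}(\ker\mathcal{A}(x,\cdot,\cdot))$, defined where the corank is $1$; and the Gauss map $\theta_X:X\dashrightarrow\widehat{\mathbb{P}}^n$, $x\mapsto T_xX$, defined on smooth points. *)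

theory Defs
  imports "HOL-Analysis.Analysis" "HOL-Library.Poly_Mapping"
    "HOL-Computational_Algebra.Polynomial" "HOL-Computational_Algebra.Factorial_Ring"
    "HOL-Computational_Algebra.Squarefree"
begin

text \<open>Multivariate polynomials in variables indexed by 'v with coefficients in 'a,
  represented as finitely supported maps from monomials (exponent vectors) to coefficients.\<close>
type_synonym ('v, 'a) mpoly = "('v \<Rightarrow>\<^sub>0 nat) \<Rightarrow>\<^sub>0 'a"

text \<open>Evaluation of a polynomial with coefficients in k at a point with coordinates in K,
  where sigma : k -> K is the field embedding.\<close>
definition mpeval :: "('a \<Rightarrow> 'b::comm_ring_1) \<Rightarrow> ('v::finite, 'a::zero) mpoly \<Rightarrow> 'b^'v \<Rightarrow> 'b" where
  "mpeval \<sigma> f x = (\<Sum>\<alpha>\<in>Poly_Mapping.keys f. \<sigma> (Poly_Mapping.lookup f \<alpha>) * (\<Prod>i\<in>UNIV. x $ i ^ Poly_Mapping.lookup \<alpha> i))"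

definition mpderiv_eval :: "('a \<Rightarrow> 'b::comm_ring_1) \<Rightarrow> 'v \<Rightarrow> ('v::finite, 'a::zero) mpoly \<Rightarrow> 'b^'v \<Rightarrow> 'b" where
  "mpderiv_eval \<sigma> j f x = (\<Sum>\<alpha>\<in>Poly_Mapping.keys f. of_nat (Poly_Mapping.lookup \<alpha> j) * \<sigma> (Poly_Mapping.lookup f \<alpha>) *
      (\<Prod>i\<in>UNIV. x $ i ^ (if i = j then Poly_Mapping.lookup \<alpha> i - 1 else Poly_Mapping.lookup \<alpha> i)))"

text \<open>Gradient vector of f at x (coordinates of the tangent hyperplane at a smooth point).\<close>
definition grad_vec :: "('a \<Rightarrow> 'b::comm_ring_1) \<Rightarrow> ('v::finite, 'a::zero) mpoly \<Rightarrow> 'b^'v \<Rightarrow> 'b^'v" where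
  "grad_vec \<sigma> f x = (\<chi> j. mpderiv_eval \<sigma> j f x)"

definition smooth_point :: "('a \<Rightarrow> 'b::field) \<Rightarrow> ('v::finite, 'a::zero) mpoly \<Rightarrow> 'b^'v \<Rightarrow> bool" where
  "smooth_point \<sigma> f x \<longleftrightarrow> x \<noteq> 0 \<and> mpeval \<sigma> f x = 0 \<and> (\<exists>j. mpderiv_eval \<sigma> j f x \<noteq> 0)"

definition pencil_poly :: "('n::finite \<Rightarrow> 'k::comm_ring_1^'m^'m) \<Rightarrow> (('n, 'k) mpoly)^'m^'m" where
  "pencil_poly A = (\<chi> r c. \<Sum>i\<in>UNIV. Poly_Mapping.single (Poly_Mapping.single i 1) (A i $ r $ c))"

definition det_poly :: "('n::finite \<Rightarrow> 'k::comm_ring_1^'m::finite^'m) \<Rightarrow> ('n, 'k) mpoly" where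
  "det_poly A = det (pencil_poly A)"

definition pencil :: "('k \<Rightarrow> 'K::comm_ring_1) \<Rightarrow> ('n::finite \<Rightarrow> 'k^'m^'m) \<Rightarrow> 'K^'n \<Rightarrow> 'K^'m^'m" where
  "pencil \<sigma> A x = (\<chi> r c. \<Sum>i\<in>UNIV. x $ i * \<sigma> (A i $ r $ c))"

text \<open>The symmetroid X = Z(det A(x,.,.)), as set of (nonzero representatives of) K-points.\<close>
definition symmetroid :: "('k \<Rightarrow> 'K::field) \<Rightarrow> ('n::finite \<Rightarrow> 'k::comm_ring_1^'m::finite^'m) \<Rightarrow> ('K^'n) set" where
  "symmetroid \<sigma> A = {x. x \<noteq> 0 \<and> mpeval \<sigma> (det_poly A) x = 0}"

text \<open>The quadratic form y^T M y as a polynomial in y (this is psi-hat(x) for M = A(x,.,.)).\<close>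
definition quadric_poly :: "'K::comm_ring_1^'m::finite^'m \<Rightarrow> ('m, 'K) mpoly" where
  "quadric_poly M = (\<Sum>r\<in>UNIV. \<Sum>c\<in>UNIV.
      Poly_Mapping.single (Poly_Mapping.single r 1 + Poly_Mapping.single c 1) (M $ r $ c))"

definition quadric_sing_point :: "'K::field^'m::finite^'m \<Rightarrow> 'K^'m \<Rightarrow> bool" where
  "quadric_sing_point M y \<longleftrightarrow> y \<noteq> 0 \<and> mpeval id (quadric_poly M) y = 0 \<and>
      (\<forall>j. mpderiv_eval id j (quadric_poly M) y = 0)"

definition singular_quadric :: "'K::field^'m::finite^'m \<Rightarrow> bool" where
  "singular_quadric M \<longleftrightarrow> (\<exists>y. quadric_sing_point M y)"

definition psi :: "('k \<Rightarrow> 'K::comm_ring_1) \<Rightarrow> ('n::finite \<Rightarrow> 'k^'m::finite^'m) \<Rightarrow> 'K^'m \<Rightarrow> 'K^'n" where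
  "psi \<sigma> A y = (\<chi> i. \<Sum>r\<in>UNIV. \<Sum>c\<in>UNIV. y $ r * \<sigma> (A i $ r $ c) * y $ c)"

definition proj_eq :: "'K::field^'n \<Rightarrow> 'K^'n \<Rightarrow> bool" where
  "proj_eq u v \<longleftrightarrow> u \<noteq> 0 \<and> v \<noteq> 0 \<and> (\<exists>c. c \<noteq> 0 \<and> u = c *s v)"

end

theory Submission
  imports Defs
begin

text \<open>Let \<open>M = A(x)\<close> be singular with kernel vector y. Cramer's rule applied to the row
  relation \<open>y\<^sup>T M = 0\<close> shows that every row of cofactors of M is proportional to y; as the
  cofactors of a symmetric matrix are symmetric, the adjugate of M is \<open>s y y\<^sup>T\<close> for a scalar s.
  Jacobi's formula writes \<open>\<partial>\<^sub>i det A(x)\<close> as the sum over k of the determinants of M with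
  row k replaced by row k of \<open>A\<^sub>i\<close>, that is \<open>tr (adj M A\<^sub>i) = s y\<^sup>T A\<^sub>i y = s \<psi>(y)\<^sub>i\<close>. At a smooth
  point the gradient is nonzero, so \<open>s \<noteq> 0\<close> and the tangent hyperplane is \<open>\<psi>(y)\<close>; a nonzero
  term of the sum also exhibits all but one rows of M as independent, so M has corank one.

  The other claims are linear algebra: when \<open>2 \<noteq> 0\<close> the singular points of the quadric
  \<open>y\<^sup>T M y\<close> are the kernel vectors of M, and \<open>y\<^sup>T A(x) y = \<Sum>\<^sub>i x\<^sub>i \<psi>(y)\<^sub>i\<close>, so \<open>\<psi>(y)\<close> is
  proportional to h iff y lies on every quadric \<open>y\<^sup>T A(x) y\<close> with \<open>x\<close> in the hyperplane \<open>h\<^sup>\<perp>\<close>.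
  None of this uses the hypotheses that det A is reduced and irreducible, that the
  characteristic is not 3, or that K is an algebraic closure of k.\<close>

section \<open>Evaluation of multivariate polynomials\<close>

definition mon_eval :: "('v::finite \<Rightarrow>\<^sub>0 nat) \<Rightarrow> 'b::comm_ring_1^'v \<Rightarrow> 'b" where
  "mon_eval \<alpha> x = (\<Prod>i\<in>UNIV. x $ i ^ Poly_Mapping.lookup \<alpha> i)"

lemma mon_eval_zero [simp]: "mon_eval 0 x = 1"
  by (simp add: mon_eval_def)

lemma mon_eval_add: "mon_eval (\<alpha> + \<beta>) x = mon_eval \<alpha> x * mon_eval \<beta> x"
  by (simp add: mon_eval_def lookup_add power_add prod.distrib)

lemma mon_eval_single_1: "mon_eval (Poly_Mapping.single i 1) x = x $ i"
proof -
  have "mon_eval (Poly_Mapping.single i 1) x = (\<Prod>l\<in>UNIV. if l = i then x $ l else 1)"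
    unfolding mon_eval_def by (rule prod.cong) (auto simp: lookup_single when_def)
  then show ?thesis by simp
qed

lemma mpeval_eq_sum_superset:
  assumes "\<tau> 0 = 0" "finite S" "Poly_Mapping.keys f \<subseteq> S"
  shows "mpeval \<tau> f x = (\<Sum>\<alpha>\<in>S. \<tau> (Poly_Mapping.lookup f \<alpha>) * mon_eval \<alpha> x)"
  unfolding mpeval_def mon_eval_def
  by (rule sum.mono_neutral_left) (use assms in \<open>auto simp: in_keys_iff\<close>)

lemma poly_mapping_sum_single_lookup:
  "f = (\<Sum>\<alpha>\<in>Poly_Mapping.keys f. Poly_Mapping.single \<alpha> (Poly_Mapping.lookup f \<alpha>))"
  by (rule poly_mapping_eqI) (auto simp: lookup_sum lookup_single when_def in_keys_iff)

locale comm_ring_hom =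
  fixes \<tau> :: "'a::comm_ring_1 \<Rightarrow> 'b::comm_ring_1"
  assumes map_add: "\<tau> (a + b) = \<tau> a + \<tau> b"
    and map_mult: "\<tau> (a * b) = \<tau> a * \<tau> b"
    and map_one: "\<tau> 1 = 1"
begin

lemma map_zero [simp]: "\<tau> 0 = 0"
  using map_add[of 0 0] by simp

lemma map_of_nat: "\<tau> (of_nat n) = of_nat n"
  by (induction n) (simp_all add: map_add map_one)

lemma mpeval_zero [simp]: "mpeval \<tau> 0 x = 0"
  by (simp add: mpeval_def)

lemma mpeval_add: "mpeval \<tau> (f + g) x = mpeval \<tau> f x + mpeval \<tau> g x"
proof -
  let ?S = "Poly_Mapping.keys f \<union> Poly_Mapping.keys g"
  have "mpeval \<tau> (f + g) x = (\<Sum>\<alpha>\<in>?S. \<tau> (Poly_Mapping.lookup (f + g) \<alpha>) * mon_eval \<alpha> x)"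
    by (rule mpeval_eq_sum_superset) (use keys_add[of f g] in auto)
  also have "\<dots> = (\<Sum>\<alpha>\<in>?S. \<tau> (Poly_Mapping.lookup f \<alpha>) * mon_eval \<alpha> x)
      + (\<Sum>\<alpha>\<in>?S. \<tau> (Poly_Mapping.lookup g \<alpha>) * mon_eval \<alpha> x)"
    by (simp add: lookup_add map_add distrib_right sum.distrib)
  also have "\<dots> = mpeval \<tau> f x + mpeval \<tau> g x"
    using mpeval_eq_sum_superset[of \<tau> ?S f x] mpeval_eq_sum_superset[of \<tau> ?S g x] by simp
  finally show ?thesis .
qed

lemma mpeval_uminus: "mpeval \<tau> (- f) x = - mpeval \<tau> f x"
  using mpeval_add[of f "- f" x] minus_unique[of "mpeval \<tau> f x"] by simp

lemma mpeval_sum: "mpeval \<tau> (\<Sum>i\<in>I. f i) x = (\<Sum>i\<in>I. mpeval \<tau> (f i) x)"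
  by (induction I rule: infinite_finite_induct) (auto simp: mpeval_add)

lemma mpeval_single: "mpeval \<tau> (Poly_Mapping.single \<alpha> c) x = \<tau> c * mon_eval \<alpha> x"
  by (subst mpeval_eq_sum_superset[where S = "{\<alpha>}"]) auto

lemma mpeval_one [simp]: "mpeval \<tau> 1 x = 1"
  using mpeval_single[of 0 1 x] by (simp add: map_one)

lemma mpeval_mult: "mpeval \<tau> (f * g) x = mpeval \<tau> f x * mpeval \<tau> g x"
proof -
  have "f * g = (\<Sum>\<alpha>\<in>Poly_Mapping.keys f. \<Sum>\<beta>\<in>Poly_Mapping.keys g.
      Poly_Mapping.single (\<alpha> + \<beta>) (Poly_Mapping.lookup f \<alpha> * Poly_Mapping.lookup g \<beta>))"
    by (subst poly_mapping_sum_single_lookup[of f], subst poly_mapping_sum_single_lookup[of g])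
      (simp add: sum_product mult_single)
  then have "mpeval \<tau> (f * g) x = (\<Sum>\<alpha>\<in>Poly_Mapping.keys f. \<Sum>\<beta>\<in>Poly_Mapping.keys g.
      \<tau> (Poly_Mapping.lookup f \<alpha>) * mon_eval \<alpha> x * (\<tau> (Poly_Mapping.lookup g \<beta>) * mon_eval \<beta> x))"
    by (simp add: mpeval_sum mpeval_single map_mult mon_eval_add ac_simps)
  also have "\<dots> = mpeval \<tau> f x * mpeval \<tau> g x"
    by (simp add: sum_product mpeval_def mon_eval_def)
  finally show ?thesis .
qed

lemma mpeval_prod: "mpeval \<tau> (\<Prod>i\<in>I. f i) x = (\<Prod>i\<in>I. mpeval \<tau> (f i) x)"
  by (induction I rule: infinite_finite_induct) (auto simp: mpeval_mult)

lemma mpeval_det: "mpeval \<tau> (det P) x = det (\<chi> r c. mpeval \<tau> (P $ r $ c) x)"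
proof -
  have sign: "mpeval \<tau> (of_int (sign p)) x = of_int (sign p)" for p
    by (simp add: sign_def mpeval_uminus)
  show ?thesis
    unfolding det_def by (simp add: mpeval_sum mpeval_mult mpeval_prod sign)
qed

end

lemma comm_ring_hom_id: "comm_ring_hom id"
  by unfold_locales simp_all

lemma comm_ring_hom_const_poly:
  assumes "comm_ring_hom \<sigma>"
  shows "comm_ring_hom (\<lambda>a. [:\<sigma> a:])"
  using assms by (simp add: comm_ring_hom_def)

lemma field_hom_eq_0_iff:
  fixes \<tau> :: "'a::field \<Rightarrow> 'b::field"
  assumes "comm_ring_hom \<tau>"
  shows "\<tau> a = 0 \<longleftrightarrow> a = 0"
proof
  assume "\<tau> a = 0"
  then have "\<tau> (a * inverse a) = 0"
    using comm_ring_hom.map_mult[OF assms] by simp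
  then show "a = 0"
    using comm_ring_hom.map_one[OF assms] by (cases "a = 0") simp_all
qed (use comm_ring_hom.map_zero[OF assms] in simp)

section \<open>Cofactors and rank of singular matrices\<close>

definition replace_row :: "'a^'n^'m \<Rightarrow> 'm \<Rightarrow> 'a^'n \<Rightarrow> 'a^'n^'m" where
  "replace_row M k v = (\<chi> i. if i = k then v else M $ i)"

definition cofactor :: "'a::comm_ring_1^'n^'n \<Rightarrow> 'n \<Rightarrow> 'n \<Rightarrow> 'a" where
  "cofactor M k c = det (replace_row M k (axis c 1))"

definition quadratic_form :: "'a::comm_ring_1^'n^'n \<Rightarrow> 'a^'n \<Rightarrow> 'a" where
  "quadratic_form M y = (\<Sum>r\<in>UNIV. \<Sum>c\<in>UNIV. y $ r * M $ r $ c * y $ c)"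

lemma det_replace_row_eq_sum_cofactor:
  fixes M :: "'a::comm_ring_1^'n::finite^'n"
  shows "det (replace_row M k v) = (\<Sum>c\<in>UNIV. v $ c * cofactor M k c)"
proof -
  have expand: "(\<Sum>c\<in>UNIV. v $ c *s axis c 1) = v"
    by (simp add: vec_eq_iff sum_component axis_def if_distrib[of "\<lambda>u. _ * u"] cong: if_cong)
  have "det (replace_row M k v) = det (\<chi> i. if i = k then (\<Sum>c\<in>UNIV. v $ c *s axis c 1) else M $ i)"
    by (simp only: replace_row_def expand)
  also have "\<dots> = (\<Sum>c\<in>UNIV. det (\<chi> i. if i = k then v $ c *s axis c 1 else M $ i))"
    by (rule det_linear_row_sum) simp
  also have "\<dots> = (\<Sum>c\<in>UNIV. v $ c * cofactor M k c)"
    unfolding cofactor_def replace_row_def by (simp only: det_row_mul)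
  finally show ?thesis .
qed

lemma cofactor_eq_det_unit_row_col:
  fixes M :: "'a::comm_ring_1^'n::finite^'n"
  shows "cofactor M k c =
    det (\<chi> i d. if i = k then (if d = c then 1 else 0) else if d = c then 0 else M $ i $ d)"
  unfolding cofactor_def det_def
proof (rule sum.cong[OF refl])
  fix p assume "p \<in> {p. p permutes (UNIV :: 'n set)}"
  then have p: "p permutes (UNIV :: 'n set)" by simp
  let ?N = "\<chi> i d. if i = k then (if d = c then 1 else 0) else if d = c then 0 else M $ i $ d"
  have "(\<Prod>i\<in>UNIV. replace_row M k (axis c 1) $ i $ p i) = (\<Prod>i\<in>UNIV. ?N $ i $ p i)"
  proof (cases "p k = c")
    case True
    then have "p i \<noteq> c" if "i \<noteq> k" for i
      using that permutes_inj[OF p] by (metis inj_eq)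
    then show ?thesis
      using True by (intro prod.cong) (auto simp: replace_row_def axis_def)
  next
    case False
    have "(\<Prod>i\<in>UNIV. replace_row M k (axis c 1) $ i $ p i) = 0"
      by (rule prod_zero[OF _ bexI[where x = k]]) (simp_all add: False replace_row_def axis_def)
    moreover have "(\<Prod>i\<in>UNIV. ?N $ i $ p i) = 0"
      by (rule prod_zero[OF _ bexI[where x = k]]) (simp_all add: False)
    ultimately show ?thesis by simp
  qed
  then show "of_int (sign p) * (\<Prod>i\<in>UNIV. replace_row M k (axis c 1) $ i $ p i) =
      of_int (sign p) * (\<Prod>i\<in>UNIV. ?N $ i $ p i)"
    by simp
qed

lemma cofactor_transpose:
  fixes M :: "'a::comm_ring_1^'n::finite^'n"
  shows "cofactor (transpose M) k c = cofactor M c k"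
proof -
  have N: "transpose (\<chi> i d. if i = c then (if d = k then 1 else 0) else if d = k then 0 else M $ i $ d) =
      (\<chi> i d. if i = k then (if d = c then 1 else 0) else if d = c then 0 else transpose M $ i $ d)"
    by (auto simp: vec_eq_iff transpose_def)
  then show ?thesis
    unfolding cofactor_eq_det_unit_row_col by (simp only: N[symmetric] det_transpose)
qed

text \<open>Cramer's rule for the row relation given by y, then a swap of rows k and l.\<close>

lemma det_replace_row_left_kernel:
  fixes M :: "'a::field^'n::finite^'n"
  assumes "y v* M = 0"
  shows "y $ l * det (replace_row M k v) = y $ k * det (replace_row M l v)"
proof (cases "k = l")
  case False
  let ?N = "replace_row M k v"
  define x where "x = (\<chi> i. if i = k then 0 else y $ i)"
  have rows: "(\<Sum>i\<in>UNIV. y $ i *s row i M) = 0"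
    using assms by (simp add: vec_eq_iff vector_matrix_mult_def row_def sum_component mult.commute)
  have "(\<Sum>i\<in>UNIV. x $ i *s row i ?N) = (\<Sum>i\<in>UNIV. if i = k then 0 else y $ i *s row i M)"
    by (rule sum.cong) (auto simp: x_def replace_row_def row_def)
  also have "\<dots> = (\<Sum>i\<in>UNIV. y $ i *s row i M) - y $ k *s row k M"
    by (simp add: sum.delta_remove sum_diff1)
  finally have "(\<Sum>i\<in>UNIV. x $ i *s row i ?N) = (- y $ k) *s row k M"
    by (simp add: rows vector_smult_lneg)
  moreover have "x $ l = y $ l"
    using False by (simp add: x_def)
  ultimately have "y $ l * det ?N = det (\<chi> i. if i = l then (- y $ k) *s row k M else row i ?N)"
    using cramer_lemma_transpose[of l x ?N] by (simp only:)
  also have "\<dots> = - y $ k * det (\<chi> i. if i = l then row k M else row i ?N)"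
    by (rule det_row_mul)
  also have "det (\<chi> i. if i = l then row k M else row i ?N) = - det (replace_row M l v)"
  proof -
    have swap: "Transposition.transpose k l permutes (UNIV :: 'n set)"
      by (rule permutes_swap_id) auto
    have "(\<chi> i. replace_row M l v $ Transposition.transpose k l i) =
        (\<chi> i. if i = l then row k M else row i ?N)"
      using False by (simp add: replace_row_def row_def vec_eq_iff Transposition.transpose_def)
    then show ?thesis
      using det_permute_rows[OF swap, of "replace_row M l v"] False by (simp add: sign_swap_id)
  qed
  finally show ?thesis by simp
qed simp

lemma cofactor_symmetric_kernel:
  fixes M :: "'a::field^'n::finite^'n"
  assumes sym: "transpose M = M" and ker: "M *v y = 0" and "y \<noteq> 0"
  shows "\<exists>s. \<forall>k c. cofactor M k c = s * y $ k * y $ c"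
proof -
  obtain l where yl: "y $ l \<noteq> 0"
    using \<open>y \<noteq> 0\<close> by (auto simp: vec_eq_iff)
  have left_ker: "y v* M = 0"
    using ker sym by (metis transpose_matrix_vector)
  have row_relation: "y $ l * cofactor M k c = y $ k * cofactor M l c" for k c
    unfolding cofactor_def by (rule det_replace_row_left_kernel[OF left_ker])
  have "cofactor M l c = cofactor M c l" for c
    using cofactor_transpose[of M c l] sym by simp
  then have "y $ l * y $ l * cofactor M k c = y $ k * y $ c * cofactor M l l" for k c
    using row_relation[of k c] row_relation[of c l] by (metis mult.assoc mult.left_commute)
  then have "cofactor M k c = cofactor M l l / (y $ l * y $ l) * y $ k * y $ c" for k c
    using yl by (simp add: field_simps)
  then show ?thesis by blast
qed

lemma sum_det_replace_row_symmetric_kernel: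
  fixes M :: "'a::field^'n::finite^'n"
  assumes "transpose M = M" and "M *v y = 0" and "y \<noteq> 0"
  shows "\<exists>s. \<forall>B. (\<Sum>k\<in>UNIV. det (replace_row M k (B $ k))) = s * quadratic_form B y"
proof -
  obtain s where cof: "\<And>k c. cofactor M k c = s * y $ k * y $ c"
    using cofactor_symmetric_kernel[OF assms] by blast
  have "(\<Sum>k\<in>UNIV. det (replace_row M k (B $ k))) = s * quadratic_form B y" for B
    by (simp add: det_replace_row_eq_sum_cofactor cof quadratic_form_def sum_distrib_left
        mult_ac)
  then show ?thesis by blast
qed

lemma det_eq_0_iff_kernel:
  fixes M :: "'a::field^'n::finite^'n"
  shows "det M = 0 \<longleftrightarrow> (\<exists>y. y \<noteq> 0 \<and> M *v y = 0)"
  using invertible_det_nz[of M] invertible_left_inverse[of M] matrix_left_invertible_ker[of M]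
  by blast

lemma rank_less_if_kernel:
  fixes M :: "'a::field^'n::finite^'m::finite"
  assumes "M *v y = 0" and "y \<noteq> 0"
  shows "rank M < CARD('n)"
proof -
  obtain l where yl: "y $ l \<noteq> 0"
    using \<open>y \<noteq> 0\<close> by (auto simp: vec_eq_iff)
  let ?H = "{v::'a^'n. (\<Sum>d\<in>UNIV. v $ d * y $ d) = 0}"
  have "vec.subspace ?H"
    unfolding vec.subspace_def
    by (auto simp: sum.distrib distrib_right mult.assoc simp flip: sum_distrib_left)
  moreover have "rows M \<subseteq> ?H"
    using assms(1) by (auto simp: rows_def row_def vec_eq_iff matrix_vector_mult_def)
  ultimately have "vec.span (rows M) \<subseteq> ?H"
    by (rule vec.span_minimal[rotated])
  moreover have "axis l 1 \<notin> ?H"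
    using yl by (simp add: axis_def if_distrib[of "\<lambda>u. u * _"] cong: if_cong)
  ultimately have "vec.dim (rows M) \<noteq> CARD('n)"
    using vec.dim_eq_full[of "rows M"] by (auto simp: vec.dimension_def card_cart_basis)
  then show ?thesis
    using dim_subset_UNIV_cart_gen[of "rows M"] by (simp add: row_rank_def_gen)
qed

lemma rank_ge_if_det_replace_row:
  fixes M :: "'a::field^'n::finite^'n"
  assumes "det (replace_row M k v) \<noteq> 0"
  shows "CARD('n) - 1 \<le> rank M"
proof -
  let ?N = "replace_row M k v"
  let ?T = "(\<lambda>i. row i ?N) ` (UNIV - {k})"
  have "vec.independent (rows ?N)"
    using det_dependent_rows assms by blast
  then have "vec.independent ?T"
    by (rule vec.independent_mono) (auto simp: rows_def)
  moreover have "?T \<subseteq> rows M"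
    by (auto simp: rows_def replace_row_def row_def)
  ultimately have "card ?T \<le> vec.dim (rows M)"
    by (intro vec.independent_card_le_dim)
  moreover have "inj (\<lambda>i. row i ?N)"
    using det_identical_rows assms by (metis injI)
  then have "card ?T = CARD('n) - 1"
    by (simp add: card_image inj_on_subset card_Diff_singleton)
  ultimately show ?thesis
    by (simp add: row_rank_def_gen)
qed

section \<open>Partial derivatives as first-order coefficients\<close>

lemma coeff_mult_1: "coeff (p * q) 1 = coeff p 0 * coeff q 1 + coeff p 1 * coeff q 0"
  by (simp add: coeff_mult atMost_Suc add.commute)

lemma coeff_prod_1:
  fixes p :: "'i \<Rightarrow> 'a::comm_ring_1 poly"
  assumes "finite S"
  shows "coeff (\<Prod>i\<in>S. p i) 1 = (\<Sum>k\<in>S. coeff (p k) 1 * (\<Prod>i\<in>S - {k}. coeff (p i) 0))"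
  using assms
proof (induction S rule: finite_induct)
  case (insert a S)
  have "insert a S - {k} = insert a (S - {k})" if "k \<in> S" for k
    using that insert by auto
  then have "(\<Sum>k\<in>S. coeff (p k) 1 * (\<Prod>i\<in>insert a S - {k}. coeff (p i) 0))
      = coeff (p a) 0 * (\<Sum>k\<in>S. coeff (p k) 1 * (\<Prod>i\<in>S - {k}. coeff (p i) 0))"
    by (simp add: sum_distrib_left insert ac_simps cong: sum.cong)
  moreover have "insert a S - {a} = S"
    using insert by auto
  ultimately show ?case
    using insert by (simp add: coeff_mult_1 poly_0_coeff_0[symmetric] poly_prod ac_simps del: One_nat_def)
qed simp

lemma coeff_power_1:
  fixes p :: "'a::comm_ring_1 poly"
  shows "coeff (p ^ n) 1 = of_nat n * coeff p 1 * coeff p 0 ^ (n - 1)"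
  using coeff_prod_1[of "{..<n}" "\<lambda>_. p"] by simp

lemma coeff_det_1:
  fixes P :: "'a::comm_ring_1 poly^'n::finite^'n"
  shows "coeff (det P) 1 =
    (\<Sum>k\<in>UNIV. det (replace_row (\<chi> i c. coeff (P $ i $ c) 0) k (\<chi> c. coeff (P $ k $ c) 1)))"
proof -
  let ?R = "\<lambda>k. replace_row (\<chi> i c. coeff (P $ i $ c) 0) k (\<chi> c. coeff (P $ k $ c) 1)"
  have "(\<Prod>i\<in>UNIV. ?R k $ i $ p i) = coeff (P $ k $ p k) 1 * (\<Prod>i\<in>UNIV - {k}. coeff (P $ i $ p i) 0)"
    for k and p :: "'n \<Rightarrow> 'n"
  proof -
    have "(\<Prod>i\<in>UNIV - {k}. ?R k $ i $ p i) = (\<Prod>i\<in>UNIV - {k}. coeff (P $ i $ p i) 0)"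
      by (rule prod.cong) (auto simp: replace_row_def)
    then show ?thesis
      by (simp add: prod.remove[of UNIV k] replace_row_def)
  qed
  then show ?thesis
    unfolding det_def
    by (simp add: coeff_sum of_int_poly coeff_prod_1 sum_distrib_left
        sum.swap[of _ "{p. p permutes UNIV}"] del: One_nat_def)
qed

text \<open>The line \<open>t \<mapsto> x + t e\<^sub>j\<close> with polynomial coordinates; the coefficient of \<open>t\<close> in
  a polynomial restricted to it is the partial derivative at x.\<close>

definition axis_line :: "'a::comm_ring_1^'v \<Rightarrow> 'v \<Rightarrow> 'a poly^'v" where
  "axis_line x j = (\<chi> i. [:x $ i, if i = j then 1 else 0:])"

lemma coeff_mon_eval_axis_line:
  fixes x :: "'a::comm_ring_1^'v::finite"
  shows "coeff (mon_eval \<alpha> (axis_line x j)) 1 = of_nat (Poly_Mapping.lookup \<alpha> j) *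
    (\<Prod>i\<in>UNIV. x $ i ^ (if i = j then Poly_Mapping.lookup \<alpha> i - 1 else Poly_Mapping.lookup \<alpha> i))"
proof -
  let ?p = "\<lambda>i. (axis_line x j $ i) ^ Poly_Mapping.lookup \<alpha> i"
  have "coeff (mon_eval \<alpha> (axis_line x j)) 1 =
      (\<Sum>k\<in>UNIV. coeff (?p k) 1 * (\<Prod>i\<in>UNIV - {k}. coeff (?p i) 0))"
    unfolding mon_eval_def by (rule coeff_prod_1) simp
  also have "\<dots> = of_nat (Poly_Mapping.lookup \<alpha> j) * x $ j ^ (Poly_Mapping.lookup \<alpha> j - 1) *
      (\<Prod>i\<in>UNIV - {j}. x $ i ^ Poly_Mapping.lookup \<alpha> i)"
    unfolding coeff_power_1 coeff_0_power
    by (simp add: axis_line_def mult.assoc if_distrib[of "\<lambda>u. u * _"]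
        if_distrib[of "\<lambda>u. _ * u"] cong: if_cong)
  also have "(\<Prod>i\<in>UNIV - {j}. x $ i ^ Poly_Mapping.lookup \<alpha> i) =
      (\<Prod>i\<in>UNIV - {j}. x $ i ^ (if i = j then Poly_Mapping.lookup \<alpha> i - 1 else Poly_Mapping.lookup \<alpha> i))"
    by (rule prod.cong) auto
  finally show ?thesis
    by (simp add: prod.remove[of UNIV j] mult.assoc)
qed

lemma coeff_mpeval_axis_line:
  fixes \<sigma> :: "'a::zero \<Rightarrow> 'b::comm_ring_1" and x :: "'b^'v::finite"
  shows "coeff (mpeval (\<lambda>a. [:\<sigma> a:]) f (axis_line x j)) 1 = mpderiv_eval \<sigma> j f x"
  unfolding mpeval_def mpderiv_eval_def
  by (simp add: coeff_sum coeff_mon_eval_axis_line mon_eval_def[symmetric] ac_simps del: One_nat_def)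

section \<open>Quadrics\<close>

definition map_matrix :: "('a \<Rightarrow> 'b) \<Rightarrow> 'a^'n^'m \<Rightarrow> 'b^'n^'m" where
  "map_matrix f M = (\<chi> r c. f (M $ r $ c))"

lemma map_matrix_id [simp]: "map_matrix id M = M"
  by (simp add: map_matrix_def vec_eq_iff)

lemma (in comm_ring_hom) mpeval_quadric_poly:
  "mpeval \<tau> (quadric_poly M) y = quadratic_form (map_matrix \<tau> M) y"
  unfolding quadric_poly_def quadratic_form_def map_matrix_def
  by (simp add: mpeval_sum mpeval_single mon_eval_add mon_eval_single_1 ac_simps del: One_nat_def)

lemma quadratic_form_eq_sum_mult_vector:
  "quadratic_form M y = (\<Sum>r\<in>UNIV. y $ r * (M *v y) $ r)"
  by (simp add: quadratic_form_def matrix_vector_mult_def sum_distrib_left mult.assoc)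

lemma mpderiv_eval_quadric_poly:
  fixes M :: "'a::comm_ring_1^'m::finite^'m"
  shows "mpderiv_eval id j (quadric_poly M) y = (M *v y) $ j + (transpose M *v y) $ j"
proof -
  interpret comm_ring_hom "\<lambda>a::'a. [:a:]"
    by (rule comm_ring_hom_const_poly[OF comm_ring_hom_id, simplified])
  have "mpderiv_eval id j (quadric_poly M) y =
      coeff (quadratic_form (map_matrix (\<lambda>a. [:a:]) M) (axis_line y j)) 1"
    using coeff_mpeval_axis_line[of id "quadric_poly M" y j] by (simp add: mpeval_quadric_poly)
  also have "\<dots> = (\<Sum>r\<in>UNIV. \<Sum>c\<in>UNIV.
      y $ r * M $ r $ c * (if c = j then 1 else 0) + (if r = j then 1 else 0) * M $ r $ c * y $ c)"
    unfolding quadratic_form_def map_matrix_def axis_line_def coeff_sum coeff_mult_1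
    by (simp add: coeff_mult_0 mult_ac)
  also have "\<dots> = (M *v y) $ j + (transpose M *v y) $ j"
    by (simp add: sum.distrib if_distrib[of "\<lambda>u. _ * u"] if_distrib[of "\<lambda>u. u * _"]
        matrix_vector_mult_def transpose_def mult_ac cong: if_cong, subst sum.swap, simp)
  finally show ?thesis .
qed

lemma quadric_sing_point_iff:
  fixes M :: "'a::field^'m::finite^'m"
  assumes "transpose M = M" and "(2::'a) \<noteq> 0"
  shows "quadric_sing_point M y \<longleftrightarrow> y \<noteq> 0 \<and> M *v y = 0"
proof -
  interpret comm_ring_hom "id :: 'a \<Rightarrow> 'a"
    by (rule comm_ring_hom_id)
  have "mpderiv_eval id j (quadric_poly M) y = 2 * (M *v y) $ j" for j
    using assms(1) by (simp only: mpderiv_eval_quadric_poly mult_2)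
  then show ?thesis
    using assms(2)
    by (auto simp: quadric_sing_point_def mpeval_quadric_poly quadratic_form_eq_sum_mult_vector
        vec_eq_iff)
qed

lemma vanishes_on_hyperplane_iff_multiple:
  fixes h v :: "'a::field^'n::finite"
  assumes "h \<noteq> 0"
  shows "(\<forall>x. x \<noteq> 0 \<and> (\<Sum>i\<in>UNIV. h $ i * x $ i) = 0 \<longrightarrow> (\<Sum>i\<in>UNIV. x $ i * v $ i) = 0) \<longleftrightarrow>
    (\<exists>c. v = c *s h)"
proof
  assume vanish: "\<forall>x. x \<noteq> 0 \<and> (\<Sum>i\<in>UNIV. h $ i * x $ i) = 0 \<longrightarrow> (\<Sum>i\<in>UNIV. x $ i * v $ i) = 0"
  obtain j where hj: "h $ j \<noteq> 0"
    using assms by (auto simp: vec_eq_iff)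
  have "v $ i * h $ j = v $ j * h $ i" for i
  proof (cases "i = j")
    case False
    define x :: "'a^'n" where "x = (\<chi> t. (if t = i then h $ j else 0) - (if t = j then h $ i else 0))"
    have "x $ i \<noteq> 0"
      using False hj by (simp add: x_def)
    then have "x \<noteq> 0"
      by auto
    moreover have "(\<Sum>t\<in>UNIV. f t * x $ t) = f i * h $ j - f j * h $ i" for f :: "'n \<Rightarrow> 'a"
      by (simp add: x_def right_diff_distrib sum_subtractf if_distrib[of "\<lambda>u. _ * u"] cong: if_cong)
    ultimately show ?thesis
      using vanish[rule_format, of x] \<open>x \<noteq> 0\<close> by (auto simp: mult.commute)
  qed simp
  then have "v = (v $ j / h $ j) *s h"
    using hj by (simp add: vec_eq_iff field_simps)
  then show "\<exists>c. v = c *s h" ..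
next
  assume "\<exists>c. v = c *s h"
  then obtain c where "v = c *s h" ..
  then have "(\<Sum>i\<in>UNIV. x $ i * v $ i) = c * (\<Sum>i\<in>UNIV. h $ i * x $ i)" for x
    by (simp add: sum_distrib_left mult_ac)
  then show "\<forall>x. x \<noteq> 0 \<and> (\<Sum>i\<in>UNIV. h $ i * x $ i) = 0 \<longrightarrow> (\<Sum>i\<in>UNIV. x $ i * v $ i) = 0"
    by simp
qed

section \<open>The symmetroid and its Gauss map\<close>

lemma pencil_symmetric:
  assumes "\<forall>i. transpose (A i) = A i"
  shows "transpose (pencil \<sigma> A x) = pencil \<sigma> A x"
proof -
  have "A i $ c $ r = transpose (A i) $ r $ c" for i r c
    by (simp add: transpose_def)
  then have "A i $ c $ r = A i $ r $ c" for i r c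
    using assms by simp
  then show ?thesis
    by (simp add: vec_eq_iff transpose_def pencil_def)
qed

lemma psi_component: "psi \<sigma> A y $ i = quadratic_form (map_matrix \<sigma> (A i)) y"
  by (simp add: psi_def quadratic_form_def map_matrix_def)

lemma quadratic_form_pencil:
  "quadratic_form (pencil \<sigma> A x) y = (\<Sum>i\<in>UNIV. x $ i * psi \<sigma> A y $ i)"
proof -
  have "quadratic_form (pencil \<sigma> A x) y =
      (\<Sum>r\<in>UNIV. \<Sum>c\<in>UNIV. \<Sum>i\<in>UNIV. x $ i * (y $ r * \<sigma> (A i $ r $ c) * y $ c))"
    by (simp add: quadratic_form_def pencil_def sum_distrib_left sum_distrib_right mult_ac)
  also have "\<dots> = (\<Sum>r\<in>UNIV. \<Sum>i\<in>UNIV. \<Sum>c\<in>UNIV. x $ i * (y $ r * \<sigma> (A i $ r $ c) * y $ c))"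
    by (intro sum.cong refl) (rule sum.swap)
  also have "\<dots> = (\<Sum>i\<in>UNIV. \<Sum>r\<in>UNIV. \<Sum>c\<in>UNIV. x $ i * (y $ r * \<sigma> (A i $ r $ c) * y $ c))"
    by (rule sum.swap)
  also have "\<dots> = (\<Sum>i\<in>UNIV. x $ i * psi \<sigma> A y $ i)"
    by (simp add: psi_def sum_distrib_left)
  finally show ?thesis .
qed

lemma (in comm_ring_hom) mpeval_pencil_poly_entry:
  "mpeval \<tau> (pencil_poly A $ r $ c) w = (\<Sum>i\<in>UNIV. w $ i * \<tau> (A i $ r $ c))"
  unfolding pencil_poly_def
  by (simp add: mpeval_sum mpeval_single mon_eval_single_1 mult.commute del: One_nat_def)

lemma mpeval_det_poly:
  assumes "comm_ring_hom \<sigma>"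
  shows "mpeval \<sigma> (det_poly A) x = det (pencil \<sigma> A x)"
proof -
  interpret comm_ring_hom \<sigma> by fact
  show ?thesis
    unfolding det_poly_def mpeval_det by (simp add: mpeval_pencil_poly_entry pencil_def)
qed

lemma mpderiv_eval_det_poly:
  fixes \<sigma> :: "'k::comm_ring_1 \<Rightarrow> 'K::comm_ring_1" and A :: "'n::finite \<Rightarrow> 'k^'m::finite^'m"
  assumes "comm_ring_hom \<sigma>"
  shows "mpderiv_eval \<sigma> j (det_poly A) x =
    (\<Sum>k\<in>UNIV. det (replace_row (pencil \<sigma> A x) k (map_matrix \<sigma> (A j) $ k)))"
proof -
  interpret comm_ring_hom "\<lambda>a. [:\<sigma> a:]"
    by (rule comm_ring_hom_const_poly[OF assms])
  let ?P = "\<chi> r c. mpeval (\<lambda>a. [:\<sigma> a:]) (pencil_poly A $ r $ c) (axis_line x j)"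
  have coeff_0: "(\<chi> i c. coeff (?P $ i $ c) 0) = pencil \<sigma> A x"
    by (simp add: vec_eq_iff mpeval_pencil_poly_entry coeff_sum axis_line_def pencil_def mult.commute)
  have coeff_1: "(\<chi> c. coeff (?P $ k $ c) 1) = map_matrix \<sigma> (A j) $ k" for k
    unfolding mpeval_pencil_poly_entry coeff_sum coeff_mult_1 vec_lambda_beta
    by (simp add: vec_eq_iff axis_line_def map_matrix_def if_distrib[of "\<lambda>u. u * _"] cong: if_cong)
  have "mpderiv_eval \<sigma> j (det_poly A) x = coeff (det ?P) 1"
    using coeff_mpeval_axis_line[of \<sigma> "det_poly A" x j] by (simp only: det_poly_def mpeval_det)
  also have "\<dots> = (\<Sum>k\<in>UNIV. det (replace_row (pencil \<sigma> A x) k (map_matrix \<sigma> (A j) $ k)))"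
    unfolding coeff_det_1 coeff_0 coeff_1 ..
  finally show ?thesis .
qed

lemma rank_pencil_smooth_point:
  fixes \<sigma> :: "'k::comm_ring_1 \<Rightarrow> 'K::field" and A :: "'n::finite \<Rightarrow> 'k^'m::finite^'m"
  assumes "comm_ring_hom \<sigma>" and "smooth_point \<sigma> (det_poly A) x"
  shows "rank (pencil \<sigma> A x) = CARD('m) - 1"
proof -
  let ?M = "pencil \<sigma> A x"
  have "det ?M = 0"
    using assms by (simp add: smooth_point_def mpeval_det_poly)
  then obtain y where "y \<noteq> 0" "?M *v y = 0"
    using det_eq_0_iff_kernel by blast
  then have "rank ?M < CARD('m)"
    by (rule rank_less_if_kernel[rotated])
  moreover obtain j where "mpderiv_eval \<sigma> j (det_poly A) x \<noteq> 0"
    using assms(2) by (auto simp: smooth_point_def)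
  then have "(\<Sum>k\<in>UNIV. det (replace_row ?M k (map_matrix \<sigma> (A j) $ k))) \<noteq> 0"
    by (simp add: mpderiv_eval_det_poly[OF assms(1)])
  then obtain k where "det (replace_row ?M k (map_matrix \<sigma> (A j) $ k)) \<noteq> 0"
    using sum.not_neutral_contains_not_neutral by blast
  then have "CARD('m) - 1 \<le> rank ?M"
    by (rule rank_ge_if_det_replace_row)
  ultimately show ?thesis
    by linarith
qed

lemma grad_vec_det_poly_proj_eq_psi:
  fixes \<sigma> :: "'k::comm_ring_1 \<Rightarrow> 'K::field" and A :: "'n::finite \<Rightarrow> 'k^'m::finite^'m"
  assumes "comm_ring_hom \<sigma>" and "\<forall>i. transpose (A i) = A i"
    and "smooth_point \<sigma> (det_poly A) x"
    and "y \<noteq> 0" and "pencil \<sigma> A x *v y = 0"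
  shows "proj_eq (grad_vec \<sigma> (det_poly A) x) (psi \<sigma> A y)"
proof -
  obtain s where s: "\<And>B. (\<Sum>k\<in>UNIV. det (replace_row (pencil \<sigma> A x) k (B $ k))) = s * quadratic_form B y"
    using sum_det_replace_row_symmetric_kernel[OF pencil_symmetric[OF assms(2)] assms(5,4)] by blast
  have grad: "grad_vec \<sigma> (det_poly A) x = s *s psi \<sigma> A y"
    by (simp add: vec_eq_iff grad_vec_def mpderiv_eval_det_poly[OF assms(1)] s psi_component)
  moreover have "grad_vec \<sigma> (det_poly A) x \<noteq> 0"
    using assms(3) by (auto simp: smooth_point_def grad_vec_def vec_eq_iff)
  ultimately have "s \<noteq> 0" and "psi \<sigma> A y \<noteq> 0"
    by auto
  with grad \<open>grad_vec \<sigma> (det_poly A) x \<noteq> 0\<close> show ?thesis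
    unfolding proj_eq_def by blast
qed

lemma singular_quadric_pencil_iff_symmetroid:
  fixes \<sigma> :: "'k::comm_ring_1 \<Rightarrow> 'K::field" and A :: "'n::finite \<Rightarrow> 'k^'m::finite^'m"
  assumes "comm_ring_hom \<sigma>" and "\<forall>i. transpose (A i) = A i" and "(2::'K) \<noteq> 0"
    and "x \<noteq> 0"
  shows "singular_quadric (pencil \<sigma> A x) \<longleftrightarrow> x \<in> symmetroid \<sigma> A"
proof -
  have "singular_quadric (pencil \<sigma> A x) \<longleftrightarrow> (\<exists>y. y \<noteq> 0 \<and> pencil \<sigma> A x *v y = 0)"
    unfolding singular_quadric_def quadric_sing_point_iff[OF pencil_symmetric[OF assms(2)] assms(3)] ..
  also have "\<dots> \<longleftrightarrow> det (pencil \<sigma> A x) = 0"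
    by (rule det_eq_0_iff_kernel[symmetric])
  also have "\<dots> \<longleftrightarrow> x \<in> symmetroid \<sigma> A"
    using assms(4) by (simp add: symmetroid_def mpeval_det_poly[OF assms(1)])
  finally show ?thesis .
qed

lemma psi_fibre_eq_base_locus:
  fixes h :: "'K::field^'n::finite" and A :: "'n \<Rightarrow> 'k^'m::finite^'m"
  assumes "h \<noteq> 0"
  shows "{y. y \<noteq> 0 \<and> (\<exists>c. psi \<sigma> A y = c *s h)} =
    {y. y \<noteq> 0 \<and> (\<forall>x. x \<noteq> 0 \<and> (\<Sum>i\<in>UNIV. h $ i * x $ i) = 0 \<longrightarrow>
        mpeval id (quadric_poly (pencil \<sigma> A x)) y = 0)}"
proof -
  interpret comm_ring_hom "id :: 'K \<Rightarrow> 'K"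
    by (rule comm_ring_hom_id)
  show ?thesis
    by (simp add: mpeval_quadric_poly quadratic_form_pencil
        vanishes_on_hyperplane_iff_multiple[OF assms])
qed

theorem proposition2p0p2:
  fixes \<sigma> :: "'k::field \<Rightarrow> 'K::field"
    and A :: "'n::finite \<Rightarrow> 'k^'m::finite^'m"
  assumes char2: "(2::'k) \<noteq> 0" and char3: "(3::'k) \<noteq> 0"
    and hom_add: "\<forall>a b. \<sigma> (a + b) = \<sigma> a + \<sigma> b"
    and hom_mult: "\<forall>a b. \<sigma> (a * b) = \<sigma> a * \<sigma> b"
    and hom_one: "\<sigma> 1 = 1"
    and alg_closed: "\<forall>p::'K poly. degree p > 0 \<longrightarrow> (\<exists>z. poly p z = 0)"
    and algebraic: "\<forall>z::'K. \<exists>p::'k poly. p \<noteq> 0 \<and> poly (map_poly \<sigma> p) z = 0"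
    and sym: "\<forall>i. transpose (A i) = A i"
    and reduced: "squarefree (det_poly A)"
    and irred: "irreducible (det_poly A)"
  shows
    "(\<forall>x. smooth_point \<sigma> (det_poly A) x \<longrightarrow>
        rank (pencil \<sigma> A x) = CARD('m) - 1 \<and>
        (\<forall>y. y \<noteq> 0 \<and> pencil \<sigma> A x *v y = 0 \<longrightarrow>
             proj_eq (grad_vec \<sigma> (det_poly A) x) (psi \<sigma> A y)))
     \<and> (\<forall>x::'K^'n. x \<noteq> 0 \<longrightarrow> (singular_quadric (pencil \<sigma> A x) \<longleftrightarrow> x \<in> symmetroid \<sigma> A))
     \<and> (\<forall>x y. x \<in> symmetroid \<sigma> A \<and> rank (pencil \<sigma> A x) = CARD('m) - 1 \<and>
             y \<noteq> 0 \<and> pencil \<sigma> A x *v y = 0 \<longrightarrow> quadric_sing_point (pencil \<sigma> A x) y)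
     \<and> (\<forall>h::'K^'n. h \<noteq> 0 \<longrightarrow>
          {y::'K^'m. y \<noteq> 0 \<and> (\<exists>c. psi \<sigma> A y = c *s h)} =
          {y. y \<noteq> 0 \<and> (\<forall>x::'K^'n. x \<noteq> 0 \<and> (\<Sum>i\<in>UNIV. h $ i * x $ i) = 0 \<longrightarrow>
                  mpeval id (quadric_poly (pencil \<sigma> A x)) y = 0)})"
proof -
  have hom: "comm_ring_hom \<sigma>"
    using hom_add hom_mult hom_one by unfold_locales auto
  have two: "(2::'K) \<noteq> 0"
    using field_hom_eq_0_iff[OF hom, of 2] comm_ring_hom.map_of_nat[OF hom, of 2] char2 by simp
  show ?thesis
    by (auto simp: rank_pencil_smooth_point[OF hom] grad_vec_det_poly_proj_eq_psi[OF hom sym]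
        singular_quadric_pencil_iff_symmetroid[OF hom sym two]
        quadric_sing_point_iff[OF pencil_symmetric[OF sym] two] psi_fibre_eq_base_locus)
qed

end
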